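(* Let $\beta\in(1,2)$, let $\tau>0$, $t_k=k\tau$, and let $n\ge 1$. Suppose $v\in C^{2}[0,t_n]\cap C^{3}(0,t_n]$ with $|v'''|\in L^1(0,t_n]$, and write $v^k=v(t_k)$. Define $$b_0^{(\beta)}=\frac{1}{\Gamma(3-\beta)},\qquad b_k^{(\beta)}=\frac{1}{\Gamma(3-\beta)}\big[(k+1)^{2-\beta}-k^{2-\beta}\big],\quad k\ge1,$$ and $$\Delta_t^{\beta}v^n=\frac{1}{\tau^{\beta}}\Big[\sum_{k=2}^{n} b_{n-k}^{(\beta)}\big(v^k-2v^{k-1}+v^{k-2}\big)+2b_{n-1}^{(\beta)}\big(v^1-v^0\big)\Big]$$ (the sum being empty when $n=1$). Then $$ {}_0^CD_t^{\beta}v(t_n)=\Delta_t^{\beta}v^n-2\,\frac{b_{n-1}^{(\beta)}}{\tau^{\beta-1}}\,v'(t_0)+R_2[v(t_n)],$$ where $$|R_2[v(t_n)]|\le \frac{9\,t_n^{2-\beta}}{\Gamma(3-\beta)}\max_{0\le k\le n-1}\int_0^1|v'''(t_k+\theta\tau)|\,d\theta\cdot\tau .$$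
   Context: For $\beta\in(1,2)$, the Caputo fractional derivative of order $\beta$ is ${}_0^CD_t^{\beta}v(t)=\frac{1}{\Gamma(2-\beta)}\int_0^t \frac{v''(s)}{(t-s)^{\beta-1}}\,ds$, and $t_0=0$. *)

theory Defs
  imports "HOL-Analysis.Analysis"
begin

text \<open>Caputo derivative of order beta in (1,2), with lower limit 0, expressed through
  the second derivative v2 = v'' of the function:
  (1/Gamma(2-beta)) * integral over [0,t] of v''(s) (t-s)^(1-beta) ds.\<close>
definition caputo_D :: "real \<Rightarrow> (real \<Rightarrow> real) \<Rightarrow> real \<Rightarrow> real" where
  "caputo_D \<beta> v2 t = (1 / Gamma (2 - \<beta>)) *
      (LINT s:{0..t}|lborel. v2 s / (t - s) powr (\<beta> - 1))"

definition b_coef :: "real \<Rightarrow> nat \<Rightarrow> real" where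
  "b_coef \<beta> k = (if k = 0 then 1 / Gamma (3 - \<beta>)
     else (1 / Gamma (3 - \<beta>)) * ((real k + 1) powr (2 - \<beta>) - (real k) powr (2 - \<beta>)))"

definition Delta_t :: "real \<Rightarrow> real \<Rightarrow> (real \<Rightarrow> real) \<Rightarrow> nat \<Rightarrow> real" where
  "Delta_t \<beta> \<tau> v n = (1 / \<tau> powr \<beta>) *
     ((\<Sum>k=2..n. b_coef \<beta> (n - k) *
          (v (real k * \<tau>) - 2 * v (real (k - 1) * \<tau>) + v (real (k - 2) * \<tau>)))
      + 2 * b_coef \<beta> (n - 1) * (v \<tau> - v 0))"

end

theory Submission
  imports Defs
begin

(* The Caputo derivative at t_n is Gamma(2 - beta)^-1 times the integral of v'' against the weight
   (t_n - s)^(1 - beta). On the cell [t_(k-1), t_k] the weight has mass Gamma(2 - beta) tau^(2 - beta) b_(n-k),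
   so the L2 approximation (together with the v'(0) term) is the same integral with v'' replaced on
   each cell by a constant: the second difference quotient at t_(k-1). By the mean value theorem this
   constant is a value v''(xi) with xi in the cell or its left neighbour (on the first cell Taylor's
   formula, using v'(0), plays this role), so it differs from v'' on the cell by at most two cell
   integrals of |v'''|, i.e. by 2 tau max_k int_0^1 |v'''(t_k + theta tau)|. Integrating this against
   the weight, of total mass t_n^(2 - beta) / (2 - beta), gives the bound with the constant 2 <= 9. *)

lemma second_difference_mean_value:
  fixes v v1 v2 :: "real \<Rightarrow> real"
  assumes "0 < h" and cont: "continuous_on {a - h..a + h} v"
    and v1: "\<And>t. t \<in> {a - h<..<a + h} \<Longrightarrow> (v has_real_derivative v1 t) (at t)"
    and v2: "\<And>t. t \<in> {a - h<..<a + h} \<Longrightarrow> (v1 has_real_derivative v2 t) (at t)"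
  obtains \<xi> where "a - h < \<xi>" "\<xi> < a + h" "v (a + h) - 2 * v a + v (a - h) = h\<^sup>2 * v2 \<xi>"
proof -
  define C where "C = (v (a + h) - 2 * v a + v (a - h)) / h\<^sup>2"
  define g where "g x = v (a + x) - 2 * v a + v (a - x) - C * x\<^sup>2" for x
  have "continuous_on {0..h} g"
    unfolding g_def by (intro continuous_intros continuous_on_compose2[OF cont]) auto
  moreover have "(g has_real_derivative v1 (a + z) - v1 (a - z) - 2 * C * z) (at z)"
    if "0 < z" "z < h" for z
    unfolding g_def using that
    by (auto intro!: derivative_eq_intros DERIV_chain2[OF v1])
  moreover have "g 0 = g h"
    using \<open>0 < h\<close> by (simp add: g_def C_def)
  ultimately obtain z where z: "0 < z" "z < h" "v1 (a + z) - v1 (a - z) = 2 * C * z"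
    using Rolle_deriv[of 0 h g "\<lambda>z. (*) (v1 (a + z) - v1 (a - z) - 2 * C * z)"] \<open>0 < h\<close>
    by (force simp: has_field_derivative_def dest: fun_cong[of _ _ 1])
  have "continuous_on {a - z..a + z} v1"
    by (rule DERIV_continuous_on[where D = v2]) (use z v2 in \<open>auto intro: has_field_derivative_at_within\<close>)
  moreover have "v1 differentiable (at t)" if "a - z < t" "t < a + z" for t
    using v2[of t] that z real_differentiable_def by force
  ultimately obtain \<xi> l where \<xi>: "a - z < \<xi>" "\<xi> < a + z" "(v1 has_real_derivative l) (at \<xi>)"
      "v1 (a + z) - v1 (a - z) = (a + z - (a - z)) * l"
    using MVT[of "a - z" "a + z" v1] z by auto
  have "l = v2 \<xi>"
    using DERIV_unique[OF \<xi>(3) v2[of \<xi>]] \<xi> z by auto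
  with z \<xi> have "C = v2 \<xi>" by simp
  have "a - h < \<xi>" "\<xi> < a + h"
    using \<xi> z by auto
  moreover have "v (a + h) - 2 * v a + v (a - h) = h\<^sup>2 * v2 \<xi>"
    using \<open>C = v2 \<xi>\<close> \<open>0 < h\<close> by (simp add: C_def field_simps)
  ultimately show ?thesis
    by (rule that)
qed

lemma taylor_second_order_mean_value:
  fixes v v1 v2 :: "real \<Rightarrow> real"
  assumes "0 < h" and cont: "continuous_on {a..a + h} v" "continuous_on {a..a + h} v1"
    and v1: "\<And>t. t \<in> {a<..<a + h} \<Longrightarrow> (v has_real_derivative v1 t) (at t)"
    and v2: "\<And>t. t \<in> {a<..<a + h} \<Longrightarrow> (v1 has_real_derivative v2 t) (at t)"
  obtains \<xi> where "a < \<xi>" "\<xi> < a + h" "2 * (v (a + h) - v a - h * v1 a) = h\<^sup>2 * v2 \<xi>"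
proof -
  define C where "C = (v (a + h) - v a - h * v1 a) / h\<^sup>2"
  define g where "g x = v (a + x) - v a - x * v1 a - C * x\<^sup>2" for x
  have "continuous_on {0..h} g"
    unfolding g_def by (intro continuous_intros continuous_on_compose2[OF cont(1)]) auto
  moreover have "(g has_real_derivative v1 (a + z) - v1 a - 2 * C * z) (at z)"
    if "0 < z" "z < h" for z
    unfolding g_def using that
    by (auto intro!: derivative_eq_intros DERIV_chain2[OF v1])
  moreover have "g 0 = g h"
    using \<open>0 < h\<close> by (simp add: g_def C_def)
  ultimately obtain z where z: "0 < z" "z < h" "v1 (a + z) - v1 a = 2 * C * z"
    using Rolle_deriv[of 0 h g "\<lambda>z. (*) (v1 (a + z) - v1 a - 2 * C * z)"] \<open>0 < h\<close>
    by (force simp: has_field_derivative_def dest: fun_cong[of _ _ 1])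
  have "continuous_on {a..a + z} v1"
    by (rule continuous_on_subset[OF cont(2)]) (use z in auto)
  moreover have "v1 differentiable (at t)" if "a < t" "t < a + z" for t
    using v2[of t] that z real_differentiable_def by force
  ultimately obtain \<xi> l where \<xi>: "a < \<xi>" "\<xi> < a + z" "(v1 has_real_derivative l) (at \<xi>)"
      "v1 (a + z) - v1 a = (a + z - a) * l"
    using MVT[of a "a + z" v1] z by auto
  have "l = v2 \<xi>"
    using DERIV_unique[OF \<xi>(3) v2[of \<xi>]] \<xi> z by auto
  with z \<xi> have "2 * C = v2 \<xi>" by simp
  have "a < \<xi>" "\<xi> < a + h"
    using \<xi> z by auto
  moreover have "2 * (v (a + h) - v a - h * v1 a) = h\<^sup>2 * v2 \<xi>"
    using \<open>2 * C = v2 \<xi>\<close> \<open>0 < h\<close> by (simp add: C_def field_simps)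
  ultimately show ?thesis
    by (rule that)
qed

lemma abs_diff_le_integral_abs_derivative:
  fixes f f' :: "real \<Rightarrow> real"
  assumes "x \<in> {a..b}" "y \<in> {a..b}" and cont: "continuous_on {a..b} f"
    and deriv: "\<And>t. t \<in> {a<..<b} \<Longrightarrow> (f has_real_derivative f' t) (at t)"
    and int: "(\<lambda>t. \<bar>f' t\<bar>) integrable_on {a..b}"
  shows "\<bar>f y - f x\<bar> \<le> integral {a..b} (\<lambda>t. \<bar>f' t\<bar>)"
proof -
  have "\<bar>f q - f p\<bar> \<le> integral {a..b} (\<lambda>t. \<bar>f' t\<bar>)" if pq: "a \<le> p" "p \<le> q" "q \<le> b" for p q
  proof -
    have "(f' has_integral (f q - f p)) {p..q}"
    proof (rule fundamental_theorem_of_calculus_interior[OF \<open>p \<le> q\<close>])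
      show "continuous_on {p..q} f"
        by (rule continuous_on_subset[OF cont]) (use pq in auto)
      fix t assume "t \<in> {p<..<q}"
      then show "(f has_vector_derivative f' t) (at t)"
        using deriv[of t] pq by (simp add: has_real_derivative_iff_has_vector_derivative)
    qed
    moreover have abs_int: "(\<lambda>t. \<bar>f' t\<bar>) integrable_on {p..q}"
      by (rule integrable_on_subinterval[OF int]) (use pq in auto)
    ultimately have "\<bar>f q - f p\<bar> \<le> integral {p..q} (\<lambda>t. \<bar>f' t\<bar>)"
      using integral_norm_bound_integral[of f' "{p..q}" "\<lambda>t. \<bar>f' t\<bar>"]
      by (force simp: integral_unique)
    also have "\<dots> \<le> integral {a..b} (\<lambda>t. \<bar>f' t\<bar>)"
      by (rule integral_subset_le) (use pq abs_int int in auto)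
    finally show ?thesis .
  qed
  then show ?thesis
    using assms(1,2) le_cases[of x y] by (metis abs_minus_commute atLeastAtMost_iff)
qed

lemma has_integral_dist_powr:
  fixes q T a b :: real
  assumes "0 < q" "a \<le> b" "b \<le> T"
  shows "((\<lambda>s. (T - s) powr (q - 1)) has_integral ((T - a) powr q - (T - b) powr q) / q) {a..b}"
proof -
  define F where "F x = - ((T - x) powr q) / q" for x
  have "((\<lambda>s. (T - s) powr (q - 1)) has_integral (F b - F a)) {a..b}"
  proof (rule fundamental_theorem_of_calculus_interior[OF \<open>a \<le> b\<close>])
    show "continuous_on {a..b} F"
      unfolding F_def using assms
      by (intro continuous_intros continuous_on_powr') auto
    fix x assume x: "x \<in> {a<..<b}"
    have "(F has_real_derivative (- (q * (T - x) powr (q - 1) * (- 1)) / q)) (at x)"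
      unfolding F_def using x assms
      by (intro derivative_eq_intros DERIV_fun_powr[THEN DERIV_chain2]) auto
    then show "(F has_vector_derivative (T - x) powr (q - 1)) (at x)"
      using \<open>0 < q\<close> by (simp add: has_real_derivative_iff_has_vector_derivative)
  qed
  then show ?thesis
    by (simp add: F_def diff_divide_distrib)
qed

lemma integral_uniform_partition:
  fixes f :: "real \<Rightarrow> 'a::banach"
  assumes "0 \<le> \<tau>" "f integrable_on {0..real n * \<tau>}"
  shows "integral {0..real n * \<tau>} f = (\<Sum>k=1..n. integral {real (k - 1) * \<tau>..real k * \<tau>} f)"
  using assms(2)
proof (induction n)
  case 0
  then show ?case by simp
next
  case (Suc n)
  have le: "0 \<le> real n * \<tau>" "real n * \<tau> \<le> real (Suc n) * \<tau>"
    using \<open>0 \<le> \<tau>\<close> by (auto intro: mult_right_mono)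
  then have "f integrable_on {0..real n * \<tau>}"
    by (intro integrable_on_subinterval[OF Suc.prems]) auto
  moreover have "integral {0..real (Suc n) * \<tau>} f
      = integral {0..real n * \<tau>} f + integral {real n * \<tau>..real (Suc n) * \<tau>} f"
    using Henstock_Kurzweil_Integration.integral_combine[OF le Suc.prems] by simp
  ultimately show ?case
    using Suc.IH by simp
qed

lemma abs_integral_weighted_minus_const_le:
  fixes f w :: "'a::euclidean_space \<Rightarrow> real"
  assumes fw: "(\<lambda>s. f s * w s) integrable_on S" and w: "w integrable_on S" "\<And>s. s \<in> S \<Longrightarrow> 0 \<le> w s"
    and close: "\<And>s. s \<in> S \<Longrightarrow> \<bar>f s - c\<bar> \<le> \<epsilon>"
  shows "\<bar>integral S (\<lambda>s. f s * w s) - c * integral S w\<bar> \<le> \<epsilon> * integral S w"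
proof -
  have cw: "(\<lambda>s. c * w s) integrable_on S"
    using w(1) by (rule integrable_on_mult_right)
  have "integral S (\<lambda>s. f s * w s) - c * integral S w = integral S (\<lambda>s. (f s - c) * w s)"
    by (simp add: left_diff_distrib integral_diff[OF fw cw])
  moreover have "norm (integral S (\<lambda>s. (f s - c) * w s)) \<le> integral S (\<lambda>s. \<epsilon> * w s)"
  proof (rule integral_norm_bound_integral)
    show "(\<lambda>s. (f s - c) * w s) integrable_on S"
      using integrable_diff[OF fw cw] by (simp add: left_diff_distrib)
    show "(\<lambda>s. \<epsilon> * w s) integrable_on S"
      using w(1) by (rule integrable_on_mult_right)
    fix s assume "s \<in> S"
    then show "norm ((f s - c) * w s) \<le> \<epsilon> * w s"
      using close[of s] w(2)[of s] by (simp add: abs_mult mult_right_mono)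
  qed
  ultimately show ?thesis
    by simp
qed

lemma weighted_piecewise_constant_error:
  fixes f w c :: "_ \<Rightarrow> real"
  assumes "0 \<le> \<tau>"
    and fw: "(\<lambda>s. f s * w s) integrable_on {0..real n * \<tau>}"
    and w: "w integrable_on {0..real n * \<tau>}" "\<And>s. 0 \<le> w s"
    and close: "\<And>k s. k \<in> {1..n} \<Longrightarrow> s \<in> {real (k - 1) * \<tau>..real k * \<tau>} \<Longrightarrow> \<bar>f s - c k\<bar> \<le> \<epsilon>"
  shows "\<bar>integral {0..real n * \<tau>} (\<lambda>s. f s * w s)
           - (\<Sum>k=1..n. c k * integral {real (k - 1) * \<tau>..real k * \<tau>} w)\<bar>
         \<le> \<epsilon> * integral {0..real n * \<tau>} w"
proof -
  define I where "I k = {real (k - 1) * \<tau>..real k * \<tau>}" for k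
  have err_I: "\<bar>integral (I k) (\<lambda>s. f s * w s) - c k * integral (I k) w\<bar> \<le> \<epsilon> * integral (I k) w"
    if k: "k \<in> {1..n}" for k
  proof (rule abs_integral_weighted_minus_const_le)
    have sub: "{real (k - 1) * \<tau>..real k * \<tau>} \<subseteq> {0..real n * \<tau>}"
      using k \<open>0 \<le> \<tau>\<close> by (auto intro: order_trans[OF _ mult_right_mono])
    show "(\<lambda>s. f s * w s) integrable_on I k" "w integrable_on I k"
      unfolding I_def using integrable_on_subinterval[OF fw sub] integrable_on_subinterval[OF w(1) sub] .
  qed (use w(2) close[OF k] in \<open>auto simp: I_def\<close>)
  have "integral {0..real n * \<tau>} (\<lambda>s. f s * w s) - (\<Sum>k=1..n. c k * integral (I k) w)
      = (\<Sum>k=1..n. integral (I k) (\<lambda>s. f s * w s) - c k * integral (I k) w)"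
    using integral_uniform_partition[OF \<open>0 \<le> \<tau>\<close> fw] by (simp add: I_def sum_subtractf)
  also have "\<bar>\<dots>\<bar> \<le> (\<Sum>k=1..n. \<epsilon> * integral (I k) w)"
    by (rule order_trans[OF sum_abs sum_mono[OF err_I]])
  also have "\<dots> = \<epsilon> * integral {0..real n * \<tau>} w"
    using integral_uniform_partition[OF \<open>0 \<le> \<tau>\<close> w(1)] by (simp add: I_def sum_distrib_left)
  finally show ?thesis
    by (simp add: I_def)
qed

lemma caputo_D_eq_integral:
  fixes f :: "real \<Rightarrow> real"
  assumes "\<beta> < 2" "0 \<le> T" and f: "continuous_on {0..T} f"
  shows "(\<lambda>s. f s * (T - s) powr (1 - \<beta>)) integrable_on {0..T}"
    and "caputo_D \<beta> f T = integral {0..T} (\<lambda>s. f s * (T - s) powr (1 - \<beta>)) / Gamma (2 - \<beta>)"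
proof -
  have "(\<lambda>s. (T - s) powr (1 - \<beta>)) integrable_on {0..T}"
    using has_integral_dist_powr[of "2 - \<beta>" 0 T T] assms by (auto simp: integrable_on_def)
  then have "(\<lambda>s. (T - s) powr (1 - \<beta>)) absolutely_integrable_on {0..T}"
    by (rule nonnegative_absolutely_integrable_1) simp
  then have "(\<lambda>s. f s * (T - s) powr (1 - \<beta>)) absolutely_integrable_on {0..T}"
    by (rule absolutely_integrable_bounded_measurable_product_real[rotated 3])
       (auto intro: continuous_imp_measurable_on_sets_lebesgue[OF f]
             compact_imp_bounded compact_continuous_image[OF f])
  moreover have "(\<lambda>s. indicator {0..T} s *\<^sub>R (f s * (T - s) powr (1 - \<beta>))) \<in> borel_measurable lborel"
  proof -
    have "(\<lambda>s. (indicator {0..T} s *\<^sub>R f s) * (T - s) powr (1 - \<beta>)) \<in> borel_measurable borel"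
      using borel_measurable_continuous_on_indicator[OF _ f] by measurable
    then show ?thesis
      by (simp add: mult.assoc)
  qed
  ultimately have int: "set_integrable lborel {0..T} (\<lambda>s. f s * (T - s) powr (1 - \<beta>))"
    by (simp add: set_integrable_def integrable_completion)
  show "(\<lambda>s. f s * (T - s) powr (1 - \<beta>)) integrable_on {0..T}"
    by (rule set_borel_integral_eq_integral(1)[OF int])
  have "f s / (T - s) powr (\<beta> - 1) = f s * (T - s) powr (1 - \<beta>)" for s
    using powr_minus[of "T - s" "\<beta> - 1"] by (simp add: divide_inverse)
  then show "caputo_D \<beta> f T = integral {0..T} (\<lambda>s. f s * (T - s) powr (1 - \<beta>)) / Gamma (2 - \<beta>)"
    by (simp add: caputo_D_def set_borel_integral_eq_integral(2)[OF int])
qed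

(* Also for j = 0, since 0 powr _ = 0. *)
lemma b_coef_eq:
  "b_coef \<beta> j = ((real j + 1) powr (2 - \<beta>) - real j powr (2 - \<beta>)) / Gamma (3 - \<beta>)"
  by (simp add: b_coef_def)

lemma Gamma_three_minus:
  fixes \<beta> :: real
  assumes "\<beta> < 2"
  shows "Gamma (3 - \<beta>) = (2 - \<beta>) * Gamma (2 - \<beta>)"
proof -
  have "2 - \<beta> \<notin> \<int>\<^sub>\<le>\<^sub>0"
    using assms by (auto elim!: nonpos_Ints_cases)
  from Gamma_plus1[OF this] show ?thesis
    by (simp add: algebra_simps)
qed

lemma has_integral_caputo_weight_cell:
  assumes "\<beta> < 2" "0 < \<tau>" "k \<in> {1..n}"
  shows "((\<lambda>s. (real n * \<tau> - s) powr (1 - \<beta>)) has_integral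
           Gamma (2 - \<beta>) * \<tau> powr (2 - \<beta>) * b_coef \<beta> (n - k)) {real (k - 1) * \<tau>..real k * \<tau>}"
proof -
  define m where "m = real (n - k)"
  define q where "q = 2 - \<beta>"
  have "q > 0"
    using \<open>\<beta> < 2\<close> by (simp add: q_def)
  have Gamma_nz: "Gamma (2 - \<beta>) \<noteq> 0"
    using Gamma_real_pos[of "2 - \<beta>"] \<open>\<beta> < 2\<close> by linarith
  have left: "real n * \<tau> - real (k - 1) * \<tau> = (m + 1) * \<tau>"
    and right: "real n * \<tau> - real k * \<tau> = m * \<tau>"
    using assms by (simp_all add: m_def of_nat_diff algebra_simps)
  have "((\<lambda>s. (real n * \<tau> - s) powr (q - 1)) has_integral
          (((m + 1) * \<tau>) powr q - (m * \<tau>) powr q) / q) {real (k - 1) * \<tau>..real k * \<tau>}"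
    using has_integral_dist_powr[of q "real (k - 1) * \<tau>" "real k * \<tau>" "real n * \<tau>"] assms \<open>q > 0\<close>
    unfolding left right by (auto intro: mult_right_mono)
  moreover have "((m + 1) * \<tau>) powr q - (m * \<tau>) powr q = \<tau> powr q * ((m + 1) powr q - m powr q)"
    using \<open>0 < \<tau>\<close> by (subst (1 2) powr_mult) (auto simp: m_def algebra_simps)
  moreover have "b_coef \<beta> (n - k) = ((m + 1) powr q - m powr q) / (q * Gamma (2 - \<beta>))"
    using Gamma_three_minus[OF \<open>\<beta> < 2\<close>] by (simp add: b_coef_eq m_def q_def)
  ultimately show ?thesis
    using \<open>q > 0\<close> by (simp add: q_def Gamma_nz)
qed

(* The L2 scheme replaces v'' on [t_(k-1), t_k] by the second difference quotient at t_(k-1); on the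
   first cell the ghost value v(-tau) is eliminated using v'(0) = dv0. *)
definition l2_slope :: "real \<Rightarrow> (real \<Rightarrow> real) \<Rightarrow> real \<Rightarrow> nat \<Rightarrow> real" where
  "l2_slope \<tau> v dv0 k =
     (if k = 1 then 2 * (v \<tau> - v 0 - \<tau> * dv0) / \<tau>\<^sup>2
      else (v (real k * \<tau>) - 2 * v (real (k - 1) * \<tau>) + v (real (k - 2) * \<tau>)) / \<tau>\<^sup>2)"

lemma Delta_t_eq_sum_l2_slope:
  assumes "0 < \<tau>" "1 \<le> n"
  shows "Delta_t \<beta> \<tau> v n - 2 * b_coef \<beta> (n - 1) / \<tau> powr (\<beta> - 1) * dv0
           = (\<Sum>k=1..n. l2_slope \<tau> v dv0 k * \<tau> powr (2 - \<beta>) * b_coef \<beta> (n - k))"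
proof -
  define S where "S = (\<Sum>k=2..n. b_coef \<beta> (n - k) *
      (v (real k * \<tau>) - 2 * v (real (k - 1) * \<tau>) + v (real (k - 2) * \<tau>)))"
  have "(\<Sum>k=1..n. l2_slope \<tau> v dv0 k * \<tau> powr (2 - \<beta>) * b_coef \<beta> (n - k))
      = l2_slope \<tau> v dv0 1 * \<tau> powr (2 - \<beta>) * b_coef \<beta> (n - 1)
        + (\<Sum>k=2..n. l2_slope \<tau> v dv0 k * \<tau> powr (2 - \<beta>) * b_coef \<beta> (n - k))"
    using sum.atLeast_Suc_atMost[of 1 n] \<open>1 \<le> n\<close> by (simp add: numeral_2_eq_2)
  also have "(\<Sum>k=2..n. l2_slope \<tau> v dv0 k * \<tau> powr (2 - \<beta>) * b_coef \<beta> (n - k)) = S / \<tau> powr \<beta>"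
    unfolding S_def sum_divide_distrib
    by (rule sum.cong) (use \<open>0 < \<tau>\<close> in \<open>auto simp: l2_slope_def powr_diff field_simps\<close>)
  also have "l2_slope \<tau> v dv0 1 * \<tau> powr (2 - \<beta>) * b_coef \<beta> (n - 1)
      = (2 * b_coef \<beta> (n - 1) * (v \<tau> - v 0) - 2 * b_coef \<beta> (n - 1) * \<tau> * dv0) / \<tau> powr \<beta>"
    using \<open>0 < \<tau>\<close> by (simp add: l2_slope_def powr_diff field_simps)
  finally have sum_eq: "(\<Sum>k=1..n. l2_slope \<tau> v dv0 k * \<tau> powr (2 - \<beta>) * b_coef \<beta> (n - k))
      = (2 * b_coef \<beta> (n - 1) * (v \<tau> - v 0) - 2 * b_coef \<beta> (n - 1) * \<tau> * dv0) / \<tau> powr \<beta>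
        + S / \<tau> powr \<beta>" .
  have "Delta_t \<beta> \<tau> v n = (S + 2 * b_coef \<beta> (n - 1) * (v \<tau> - v 0)) / \<tau> powr \<beta>"
    by (simp add: Delta_t_def S_def)
  moreover have "2 * b_coef \<beta> (n - 1) / \<tau> powr (\<beta> - 1) * dv0 = 2 * b_coef \<beta> (n - 1) * \<tau> * dv0 / \<tau> powr \<beta>"
    using \<open>0 < \<tau>\<close> by (simp add: powr_diff)
  ultimately show ?thesis
    unfolding sum_eq by (simp add: diff_divide_distrib add_divide_distrib)
qed

(* For k = 1 the lower bound is 0, by truncated subtraction. *)
lemma l2_slope_mean_value:
  fixes v v1 v2 :: "real \<Rightarrow> real"
  assumes "0 < \<tau>" and k: "k \<in> {1..n}"
    and cont: "continuous_on {0..real n * \<tau>} v" "continuous_on {0..real n * \<tau>} v1"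
    and d1: "\<And>t. t \<in> {0<..<real n * \<tau>} \<Longrightarrow> (v has_real_derivative v1 t) (at t)"
    and d2: "\<And>t. t \<in> {0<..<real n * \<tau>} \<Longrightarrow> (v1 has_real_derivative v2 t) (at t)"
  obtains \<xi> where "real (k - 2) * \<tau> < \<xi>" "\<xi> < real k * \<tau>" "l2_slope \<tau> v (v1 0) k = v2 \<xi>"
proof (cases "k = 1")
  case True
  have "\<tau> \<le> real n * \<tau>"
    using k \<open>0 < \<tau>\<close> by simp
  then have sub: "{0..0 + \<tau>} \<subseteq> {0..real n * \<tau>}"
    by auto
  obtain \<xi> where \<xi>: "0 < \<xi>" "\<xi> < 0 + \<tau>" "2 * (v (0 + \<tau>) - v 0 - \<tau> * v1 0) = \<tau>\<^sup>2 * v2 \<xi>"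
  proof (rule taylor_second_order_mean_value[OF \<open>0 < \<tau>\<close>])
    show "continuous_on {0..0 + \<tau>} v" "continuous_on {0..0 + \<tau>} v1"
      using continuous_on_subset[OF cont(1) sub] continuous_on_subset[OF cont(2) sub] .
  qed (auto intro!: d1 d2 less_le_trans[OF _ \<open>\<tau> \<le> real n * \<tau>\<close>])
  show ?thesis
  proof (rule that)
    show "l2_slope \<tau> v (v1 0) k = v2 \<xi>"
      using \<xi> True \<open>0 < \<tau>\<close> by (simp add: l2_slope_def field_simps)
  qed (use \<xi> True in simp_all)
next
  case False
  define a where "a = real (k - 1) * \<tau>"
  have ends: "real k * \<tau> = a + \<tau>" "real (k - 2) * \<tau> = a - \<tau>"
    using False k by (simp_all add: a_def of_nat_diff algebra_simps)
  have "0 \<le> a - \<tau>"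
    unfolding ends(2)[symmetric] using \<open>0 < \<tau>\<close> by simp
  moreover have "a + \<tau> \<le> real n * \<tau>"
    unfolding ends(1)[symmetric] using k \<open>0 < \<tau>\<close> by simp
  ultimately have sub: "{a - \<tau>..a + \<tau>} \<subseteq> {0..real n * \<tau>}"
    by auto
  obtain \<xi> where \<xi>: "a - \<tau> < \<xi>" "\<xi> < a + \<tau>" "v (a + \<tau>) - 2 * v a + v (a - \<tau>) = \<tau>\<^sup>2 * v2 \<xi>"
  proof (rule second_difference_mean_value[of \<tau> a v v1 v2, OF \<open>0 < \<tau>\<close>])
    show "continuous_on {a - \<tau>..a + \<tau>} v"
      using continuous_on_subset[OF cont(1) sub] .
  qed (use d1 d2 sub in auto)
  show ?thesis
  proof (rule that)
    show "l2_slope \<tau> v (v1 0) k = v2 \<xi>"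
      unfolding l2_slope_def ends a_def[symmetric] using \<xi> False \<open>0 < \<tau>\<close> by simp
  qed (use \<xi> in \<open>simp_all add: ends\<close>)
qed

lemma l2_slope_error:
  fixes v v1 v2 v3 :: "real \<Rightarrow> real"
  assumes "0 < \<tau>" and k: "k \<in> {1..n}" and s: "s \<in> {real (k - 1) * \<tau>..real k * \<tau>}"
    and cont: "continuous_on {0..real n * \<tau>} v" "continuous_on {0..real n * \<tau>} v1"
      "continuous_on {0..real n * \<tau>} v2"
    and d1: "\<And>t. t \<in> {0<..<real n * \<tau>} \<Longrightarrow> (v has_real_derivative v1 t) (at t)"
    and d2: "\<And>t. t \<in> {0<..<real n * \<tau>} \<Longrightarrow> (v1 has_real_derivative v2 t) (at t)"
    and d3: "\<And>t. t \<in> {0<..<real n * \<tau>} \<Longrightarrow> (v2 has_real_derivative v3 t) (at t)"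
    and int3: "(\<lambda>t. \<bar>v3 t\<bar>) integrable_on {0..real n * \<tau>}"
    and osc: "\<And>j. j \<in> {1..n} \<Longrightarrow> integral {real (j - 1) * \<tau>..real j * \<tau>} (\<lambda>t. \<bar>v3 t\<bar>) \<le> \<omega>"
  shows "\<bar>v2 s - l2_slope \<tau> v (v1 0) k\<bar> \<le> 2 * \<omega>"
proof -
  obtain \<xi> where \<xi>: "real (k - 2) * \<tau> < \<xi>" "\<xi> < real k * \<tau>" and slope: "l2_slope \<tau> v (v1 0) k = v2 \<xi>"
    using l2_slope_mean_value[OF \<open>0 < \<tau>\<close> k cont(1,2) d1 d2] by blast
  have cell_osc: "\<bar>v2 y - v2 x\<bar> \<le> \<omega>"
    if j: "j \<in> {1..n}" and "x \<in> {real (j - 1) * \<tau>..real j * \<tau>}" "y \<in> {real (j - 1) * \<tau>..real j * \<tau>}"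
    for j x y
  proof -
    have sub: "{real (j - 1) * \<tau>..real j * \<tau>} \<subseteq> {0..real n * \<tau>}"
      using j \<open>0 < \<tau>\<close> by (auto intro: order_trans[OF _ mult_right_mono])
    have "\<bar>v2 y - v2 x\<bar> \<le> integral {real (j - 1) * \<tau>..real j * \<tau>} (\<lambda>t. \<bar>v3 t\<bar>)"
    proof (rule abs_diff_le_integral_abs_derivative[where f = v2 and f' = v3])
      show "continuous_on {real (j - 1) * \<tau>..real j * \<tau>} v2"
        by (rule continuous_on_subset[OF cont(3) sub])
      show "(\<lambda>t. \<bar>v3 t\<bar>) integrable_on {real (j - 1) * \<tau>..real j * \<tau>}"
        by (rule integrable_on_subinterval[OF int3 sub])
    qed (use that sub in \<open>auto intro!: d3\<close>)
    with osc[OF j] show ?thesis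
      by linarith
  qed
  have "0 \<le> \<omega>"
    using cell_osc[OF k s s] by simp
  show ?thesis
  proof (cases "real (k - 1) * \<tau> \<le> \<xi>")
    case True
    then have "\<bar>v2 s - v2 \<xi>\<bar> \<le> \<omega>"
      using cell_osc[OF k _ s] \<xi> by simp
    then show ?thesis
      using \<open>0 \<le> \<omega>\<close> by (simp add: slope)
  next
    case False
    then have "k \<noteq> 1"
      using \<xi> by auto
    then have k1: "k - 1 \<in> {1..n}" and prev: "k - 1 - 1 = k - 2" and "2 \<le> k"
      using k by auto
    have "real (k - 1) * \<tau> \<in> {real (k - 1) * \<tau>..real k * \<tau>}"
      using \<open>0 < \<tau>\<close> by simp
    then have "\<bar>v2 s - v2 (real (k - 1) * \<tau>)\<bar> \<le> \<omega>"
      using cell_osc[OF k _ s] by blast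
    moreover have "\<bar>v2 (real (k - 1) * \<tau>) - v2 \<xi>\<bar> \<le> \<omega>"
      using cell_osc[OF k1, of \<xi> "real (k - 1) * \<tau>"] \<xi> False \<open>0 < \<tau>\<close> \<open>2 \<le> k\<close>
      unfolding prev by (simp add: of_nat_diff mult_right_mono)
    ultimately show ?thesis
      by (simp add: slope)
  qed
qed

lemma set_integrable_Icc_iff_Ioc:
  fixes f :: "real \<Rightarrow> 'a::{banach, second_countable_topology}"
  shows "set_integrable lborel {a..b} f \<longleftrightarrow> set_integrable lborel {a<..b} f"
  by (rule set_integrable_discrete_difference[of "{a}"]) auto

lemma set_integral_unit_interval_affine:
  fixes f :: "real \<Rightarrow> real"
  assumes "0 < \<tau>"
  shows "\<tau> * (LINT \<theta>:{0..1}|lborel. f (a + \<theta> * \<tau>)) = (LINT s:{a..a + \<tau>}|lborel. f s)"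
proof -
  have "indicator {a..a + \<tau>} (a + \<tau> * \<theta>) = (indicator {0..1} \<theta> :: real)" for \<theta>
    using assms by (auto simp: indicator_def zero_le_mult_iff mult_le_cancel_left1)
  then show ?thesis
    using lborel_integral_real_affine[of \<tau> "\<lambda>s. indicator {a..a + \<tau>} s *\<^sub>R f s" a] assms
    by (simp add: set_lebesgue_integral_def mult.commute)
qed

lemma integral_cell_le_Max_unit_integral:
  fixes f :: "real \<Rightarrow> real"
  assumes "0 < \<tau>" and f: "set_integrable lborel {0..real n * \<tau>} f" and j: "j \<in> {1..n}"
  shows "integral {real (j - 1) * \<tau>..real j * \<tau>} f
           \<le> \<tau> * Max ((\<lambda>k. LINT \<theta>:{0..1}|lborel. f (real k * \<tau> + \<theta> * \<tau>)) ` {0..n - 1})"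
proof -
  have cell: "{real (j - 1) * \<tau>..real j * \<tau>} = {real (j - 1) * \<tau>..real (j - 1) * \<tau> + \<tau>}"
    using j by (simp add: of_nat_diff algebra_simps)
  have "{real (j - 1) * \<tau>..real j * \<tau>} \<subseteq> {0..real n * \<tau>}"
    using j \<open>0 < \<tau>\<close> by (auto intro: order_trans[OF _ mult_right_mono])
  then have "integral {real (j - 1) * \<tau>..real j * \<tau>} f
      = (LINT s:{real (j - 1) * \<tau>..real (j - 1) * \<tau> + \<tau>}|lborel. f s)"
    unfolding cell by (intro set_borel_integral_eq_integral(2)[symmetric] set_integrable_subset[OF f]) auto
  also have "\<dots> = \<tau> * (LINT \<theta>:{0..1}|lborel. f (real (j - 1) * \<tau> + \<theta> * \<tau>))"
    using set_integral_unit_interval_affine[OF \<open>0 < \<tau>\<close>, of f "real (j - 1) * \<tau>"] by simp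
  also have "\<dots> \<le> \<tau> * Max ((\<lambda>k. LINT \<theta>:{0..1}|lborel. f (real k * \<tau> + \<theta> * \<tau>)) ` {0..n - 1})"
  proof -
    have "(LINT \<theta>:{0..1}|lborel. f (real (j - 1) * \<tau> + \<theta> * \<tau>))
        \<in> (\<lambda>k. LINT \<theta>:{0..1}|lborel. f (real k * \<tau> + \<theta> * \<tau>)) ` {0..n - 1}"
      by (rule imageI) (use j in auto)
    then show ?thesis
      using \<open>0 < \<tau>\<close> by (intro mult_left_mono Max_ge) auto
  qed
  finally show ?thesis .
qed

lemma Delta_t_eq_weighted_sum_l2_slope:
  assumes "\<beta> < 2" "0 < \<tau>" "1 \<le> n"
  shows "Delta_t \<beta> \<tau> v n - 2 * b_coef \<beta> (n - 1) / \<tau> powr (\<beta> - 1) * dv0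
           = (\<Sum>k=1..n. l2_slope \<tau> v dv0 k
                * integral {real (k - 1) * \<tau>..real k * \<tau>} (\<lambda>s. (real n * \<tau> - s) powr (1 - \<beta>)))
             / Gamma (2 - \<beta>)"
  unfolding Delta_t_eq_sum_l2_slope[OF \<open>0 < \<tau>\<close> \<open>1 \<le> n\<close>] sum_divide_distrib
proof (rule sum.cong[OF refl])
  fix k assume "k \<in> {1..n}"
  have "Gamma (2 - \<beta>) \<noteq> 0"
    using Gamma_real_pos[of "2 - \<beta>"] \<open>\<beta> < 2\<close> by linarith
  then show "l2_slope \<tau> v dv0 k * \<tau> powr (2 - \<beta>) * b_coef \<beta> (n - k)
      = l2_slope \<tau> v dv0 k * integral {real (k - 1) * \<tau>..real k * \<tau>} (\<lambda>s. (real n * \<tau> - s) powr (1 - \<beta>))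
        / Gamma (2 - \<beta>)"
    unfolding integral_unique[OF has_integral_caputo_weight_cell[OF \<open>\<beta> < 2\<close> \<open>0 < \<tau>\<close> \<open>k \<in> {1..n}\<close>]]
    by simp
qed

lemma caputo_D_l2_error:
  fixes v v1 v2 v3 :: "real \<Rightarrow> real"
  assumes "\<beta> < 2" "0 < \<tau>" "1 \<le> n"
    and cont: "continuous_on {0..real n * \<tau>} v" "continuous_on {0..real n * \<tau>} v1"
      "continuous_on {0..real n * \<tau>} v2"
    and d1: "\<And>t. t \<in> {0<..<real n * \<tau>} \<Longrightarrow> (v has_real_derivative v1 t) (at t)"
    and d2: "\<And>t. t \<in> {0<..<real n * \<tau>} \<Longrightarrow> (v1 has_real_derivative v2 t) (at t)"
    and d3: "\<And>t. t \<in> {0<..<real n * \<tau>} \<Longrightarrow> (v2 has_real_derivative v3 t) (at t)"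
    and int3: "(\<lambda>t. \<bar>v3 t\<bar>) integrable_on {0..real n * \<tau>}"
    and osc: "\<And>j. j \<in> {1..n} \<Longrightarrow> integral {real (j - 1) * \<tau>..real j * \<tau>} (\<lambda>t. \<bar>v3 t\<bar>) \<le> \<omega>"
  shows "\<bar>caputo_D \<beta> v2 (real n * \<tau>)
           - (Delta_t \<beta> \<tau> v n - 2 * b_coef \<beta> (n - 1) / \<tau> powr (\<beta> - 1) * v1 0)\<bar>
         \<le> 2 * (real n * \<tau>) powr (2 - \<beta>) / Gamma (3 - \<beta>) * \<omega>"
proof -
  define T where "T = real n * \<tau>"
  define W where "W = (\<lambda>s. (T - s) powr (1 - \<beta>))"
  define G where "G = Gamma (2 - \<beta>)"
  have "G > 0"
    using \<open>\<beta> < 2\<close> by (simp add: G_def)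
  have W: "(W has_integral T powr (2 - \<beta>) / (2 - \<beta>)) {0..T}"
    using has_integral_dist_powr[of "2 - \<beta>" 0 T T] \<open>\<beta> < 2\<close> \<open>0 < \<tau>\<close> by (simp add: W_def T_def)
  have "\<bar>integral {0..T} (\<lambda>s. v2 s * W s)
          - (\<Sum>k=1..n. l2_slope \<tau> v (v1 0) k * integral {real (k - 1) * \<tau>..real k * \<tau>} W)\<bar>
        \<le> 2 * \<omega> * integral {0..T} W"
    unfolding T_def
  proof (rule weighted_piecewise_constant_error)
    show "(\<lambda>s. v2 s * W s) integrable_on {0..real n * \<tau>}"
      using caputo_D_eq_integral(1)[OF \<open>\<beta> < 2\<close> _ cont(3)] \<open>0 < \<tau>\<close> by (simp add: W_def T_def)
    show "W integrable_on {0..real n * \<tau>}"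
      using W by (auto simp: T_def)
    show "0 \<le> W s" for s
      by (simp add: W_def)
    fix k s assume "k \<in> {1..n}" "s \<in> {real (k - 1) * \<tau>..real k * \<tau>}"
    then show "\<bar>v2 s - l2_slope \<tau> v (v1 0) k\<bar> \<le> 2 * \<omega>"
      by (rule l2_slope_error[OF \<open>0 < \<tau>\<close> _ _ cont d1 d2 d3 int3 osc])
  qed (use \<open>0 < \<tau>\<close> in simp)
  moreover have "caputo_D \<beta> v2 T = integral {0..T} (\<lambda>s. v2 s * W s) / G"
    using caputo_D_eq_integral(2)[OF \<open>\<beta> < 2\<close> _ cont(3)] \<open>0 < \<tau>\<close> by (simp add: W_def T_def G_def)
  moreover have "Delta_t \<beta> \<tau> v n - 2 * b_coef \<beta> (n - 1) / \<tau> powr (\<beta> - 1) * v1 0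
      = (\<Sum>k=1..n. l2_slope \<tau> v (v1 0) k * integral {real (k - 1) * \<tau>..real k * \<tau>} W) / G"
    using Delta_t_eq_weighted_sum_l2_slope[OF assms(1-3)] by (simp add: W_def T_def G_def)
  ultimately have "\<bar>caputo_D \<beta> v2 T - (Delta_t \<beta> \<tau> v n - 2 * b_coef \<beta> (n - 1) / \<tau> powr (\<beta> - 1) * v1 0)\<bar>
      \<le> 2 * \<omega> * integral {0..T} W / G"
    using \<open>G > 0\<close> by (simp add: diff_divide_distrib[symmetric] divide_right_mono)
  also have "\<dots> = 2 * T powr (2 - \<beta>) / Gamma (3 - \<beta>) * \<omega>"
    unfolding integral_unique[OF W] Gamma_three_minus[OF \<open>\<beta> < 2\<close>] G_def[symmetric]
    using \<open>G > 0\<close> \<open>\<beta> < 2\<close> by (simp add: field_simps)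
  finally show ?thesis
    unfolding T_def .
qed

theorem lemma2:
  fixes \<beta> \<tau> :: real and n :: nat and v v1 v2 v3 :: "real \<Rightarrow> real"
  assumes beta: "1 < \<beta>" "\<beta> < 2"
    and tau: "\<tau> > 0"
    and n: "n \<ge> 1"
    and d1: "\<And>t. t \<in> {0..real n * \<tau>} \<Longrightarrow>
               (v has_real_derivative v1 t) (at t within {0..real n * \<tau>})"
    and d2: "\<And>t. t \<in> {0..real n * \<tau>} \<Longrightarrow>
               (v1 has_real_derivative v2 t) (at t within {0..real n * \<tau>})"
    and c2: "continuous_on {0..real n * \<tau>} v2"
    and d3: "\<And>t. t \<in> {0<..real n * \<tau>} \<Longrightarrow>
               (v2 has_real_derivative v3 t) (at t within {0<..real n * \<tau>})"
    and c3: "continuous_on {0<..real n * \<tau>} v3"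
    and L1: "set_integrable lborel {0<..real n * \<tau>} (\<lambda>t. \<bar>v3 t\<bar>)"
  shows "\<bar>caputo_D \<beta> v2 (real n * \<tau>)
           - (Delta_t \<beta> \<tau> v n - 2 * b_coef \<beta> (n - 1) / \<tau> powr (\<beta> - 1) * v1 0)\<bar>
         \<le> 9 * (real n * \<tau>) powr (2 - \<beta>) / Gamma (3 - \<beta>)
            * Max ((\<lambda>k. LINT \<theta>:{0..1}|lborel. \<bar>v3 (real k * \<tau> + \<theta> * \<tau>)\<bar>) ` {0..n - 1})
            * \<tau>"
proof -
  define M where "M = Max ((\<lambda>k. LINT \<theta>:{0..1}|lborel. \<bar>v3 (real k * \<tau> + \<theta> * \<tau>)\<bar>) ` {0..n - 1})"
  have int3: "set_integrable lborel {0..real n * \<tau>} (\<lambda>t. \<bar>v3 t\<bar>)"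
    using L1 set_integrable_Icc_iff_Ioc by blast
  have "(v has_real_derivative v1 t) (at t)" "(v1 has_real_derivative v2 t) (at t)"
    "(v2 has_real_derivative v3 t) (at t)" if "t \<in> {0<..<real n * \<tau>}" for t
    using d1[of t] d2[of t] d3[of t] that
      at_within_interior[of t "{0..real n * \<tau>}"] at_within_interior[of t "{0<..real n * \<tau>}"]
    by auto
  then have "\<bar>caputo_D \<beta> v2 (real n * \<tau>)
               - (Delta_t \<beta> \<tau> v n - 2 * b_coef \<beta> (n - 1) / \<tau> powr (\<beta> - 1) * v1 0)\<bar>
             \<le> 2 * (real n * \<tau>) powr (2 - \<beta>) / Gamma (3 - \<beta>) * (\<tau> * M)"
    using DERIV_continuous_on[OF d1] DERIV_continuous_on[OF d2] c2
      set_borel_integral_eq_integral(1)[OF int3]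
      integral_cell_le_Max_unit_integral[OF tau int3, folded M_def]
    by (intro caputo_D_l2_error[OF beta(2) tau n]) auto
  moreover
  let ?a = "(real n * \<tau>) powr (2 - \<beta>)" and ?g = "Gamma (3 - \<beta>)"
  have "2 * ?a / ?g * (\<tau> * M) = 2 * (?a / ?g * M * \<tau>)" "9 * ?a / ?g * M * \<tau> = 9 * (?a / ?g * M * \<tau>)"
    by simp_all
  ultimately show ?thesis
    unfolding M_def[symmetric] by linarith
qed

end
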